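(* Let $\mathcal{L}$ be the collection of lower subsets of $\Omega$ and $\mathcal{B}_{\mathcal{L}}=\mathcal{B}\cap\mathcal{L}$ the collection of beneficial lower subsets of $\Omega$ (definitions below). Then $\mathcal{L}$ and $\mathcal{B}_{\mathcal{L}}$ are quadratic algebras of subsets of $\Omega$, and $\widehat{\mu}$ is a $q$-measure on $\mathcal{B}_{\mathcal{L}}$ that extends $\mu$; that is, $\mathcal{C}\subseteq\mathcal{B}_{\mathcal{L}}$ and $\widehat{\mu}(A)=\mu(A)$ for all $A\in\mathcal{C}$.
   Context: For $n\ge 1$, an $n$-path is a string $\omega=\alpha_0\alpha_1\cdots\alpha_n$ with $\alpha_k\in\{0,1\}$ and $\alpha_0=0$; $\Omega_n$ is the set of $n$-paths. For $n$-paths $\omega=\alpha_0\cdots\alpha_n$, $\omega'=\alpha'_0\cdots\alpha'_n$ put $D^n(\omega,\omega')=2^{-n}\prod_{k=1}^n i^{|\alpha_k-\alpha_{k-1}|}\prod_{k=1}^n i^{-|\alpha'_k-\alpha'_{k-1}|}\,\delta_{\alpha_n\alpha'_n}$ ($i=\sqrt{-1}$), and for $A\subseteq\Omega_n$ let $\mu_n(A)=\sum_{\omega,\omega'\in A}D^n(\omega,\omega')$ (a nonnegative real). $\Omega$ is the set of infinite sequences $\alpha_0\alpha_1\alpha_2\cdots$ with $\alpha_k\in\{0,1\}$, $\alpha_0=0$. A cylinder set is a set of the form $\{\alpha_0\alpha_1\cdots\in\Omega:\alpha_0\cdots\alpha_n\in B\}$ for some $n$ and some $B\subseteq\Omega_n$;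 $\mathcal{C}$ denotes the algebra of cylinder sets, and $\mu$ on $\mathcal{C}$ is defined by $\mu(\{\alpha_0\alpha_1\cdots:\alpha_0\cdots\alpha_n\in B\})=\mu_n(B)$ (this is well defined). For $A\subseteq\Omega$ and $n\ge 0$, $A^{(n)}=\{\omega\in\Omega:\text{there is }\omega'\in A\text{ whose first } n+1 \text{ entries agree with those of }\omega\}$; this is a cylinder set. $A$ is a lower set if $A=\bigcap_n A^{(n)}$; $A$ is beneficial if $\lim_{n\to\infty}\mu(A^{(n)})$ exists and is finite, and then $\widehat{\mu}(A)=\lim_{n\to\infty}\mu(A^{(n)})$. $\mathcal{B}$ is the set of beneficial sets. A collection $Q$ of subsets of a set $S$ is a quadratic algebra if $\emptyset,S\in Q$ and whenever $A,B,C\in Q$ are mutually disjoint with $A\cup B,A\cup C,B\cup C\in Q$, then $A\cup B\cup C\in Q$. A $q$-measure on a quadratic algebra $Q$ is a map $\nu:Q\to[0,\infty)$ such that for all mutually disjoint $A,B,C\in Q$ with $A\cup B,A\cup C,B\cup C\in Q$: $\nu(A\cup B\cup C)=\nu(A\cup B)+\nu(A\cup C)+\nu(B\cup C)-\nu(A)-\nu(B)-\nu(C)$. *)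

theory Defs
  imports Complex_Main
begin

definition Omega_n :: "nat \<Rightarrow> nat list set" where
  "Omega_n n = {xs. length xs = Suc n \<and> set xs \<subseteq> {0,1} \<and> xs ! 0 = 0}"

definition jump :: "nat list \<Rightarrow> nat \<Rightarrow> nat" where
  "jump xs k = nat \<bar>int (xs ! k) - int (xs ! (k - 1))\<bar>"

definition D :: "nat \<Rightarrow> nat list \<Rightarrow> nat list \<Rightarrow> complex" where
  "D n w w' = (1 / 2 ^ n) * (\<Prod>k\<in>{1..n}. \<i> ^ jump w k)
      * (\<Prod>k\<in>{1..n}. inverse (\<i> ^ jump w' k))
      * (if w ! n = w' ! n then 1 else 0)"

definition mu_n :: "nat \<Rightarrow> nat list set \<Rightarrow> real" where
  "mu_n n B = Re (\<Sum>w\<in>B. \<Sum>w'\<in>B. D n w w')"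

definition Omega :: "(nat \<Rightarrow> nat) set" where
  "Omega = {w. w 0 = 0 \<and> (\<forall>k. w k \<in> {0,1})}"

definition prefix_of :: "nat \<Rightarrow> (nat \<Rightarrow> nat) \<Rightarrow> nat list" where
  "prefix_of n w = map w [0..<Suc n]"

definition cyl :: "nat \<Rightarrow> nat list set \<Rightarrow> (nat \<Rightarrow> nat) set" where
  "cyl n B = {w \<in> Omega. prefix_of n w \<in> B}"

definition Cyl :: "(nat \<Rightarrow> nat) set set" where
  "Cyl = {A. \<exists>n B. B \<subseteq> Omega_n n \<and> A = cyl n B}"

definition mu :: "(nat \<Rightarrow> nat) set \<Rightarrow> real" where
  "mu A = (THE x. \<exists>n B. B \<subseteq> Omega_n n \<and> A = cyl n B \<and> x = mu_n n B)"

definition up :: "nat \<Rightarrow> (nat \<Rightarrow> nat) set \<Rightarrow> (nat \<Rightarrow> nat) set" where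
  "up n A = {w \<in> Omega. \<exists>w'\<in>A. \<forall>k\<le>n. w k = w' k}"

definition Lower :: "(nat \<Rightarrow> nat) set set" where
  "Lower = {A. A \<subseteq> Omega \<and> A = (\<Inter>n. up n A)}"

definition Beneficial :: "(nat \<Rightarrow> nat) set set" where
  "Beneficial = {A. A \<subseteq> Omega \<and> convergent (\<lambda>n. mu (up n A))}"

definition mu_hat :: "(nat \<Rightarrow> nat) set \<Rightarrow> real" where
  "mu_hat A = lim (\<lambda>n. mu (up n A))"

definition quad_alg :: "'a set \<Rightarrow> 'a set set \<Rightarrow> bool" where
  "quad_alg S Q \<longleftrightarrow> Q \<subseteq> Pow S \<and> {} \<in> Q \<and> S \<in> Q \<and>
     (\<forall>A\<in>Q. \<forall>B\<in>Q. \<forall>C\<in>Q. A \<inter> B = {} \<and> A \<inter> C = {} \<and> B \<inter> C = {} \<and>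
        A \<union> B \<in> Q \<and> A \<union> C \<in> Q \<and> B \<union> C \<in> Q \<longrightarrow> A \<union> B \<union> C \<in> Q)"

definition q_measure :: "'a set set \<Rightarrow> ('a set \<Rightarrow> real) \<Rightarrow> bool" where
  "q_measure Q \<nu> \<longleftrightarrow> (\<forall>A\<in>Q. \<nu> A \<ge> 0) \<and>
     (\<forall>A\<in>Q. \<forall>B\<in>Q. \<forall>C\<in>Q. A \<inter> B = {} \<and> A \<inter> C = {} \<and> B \<inter> C = {} \<and>
        A \<union> B \<in> Q \<and> A \<union> C \<in> Q \<and> B \<union> C \<in> Q \<longrightarrow>
        \<nu> (A \<union> B \<union> C) = \<nu> (A \<union> B) + \<nu> (A \<union> C) + \<nu> (B \<union> C) - \<nu> A - \<nu> B - \<nu> C)"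

end

theory Submission
  imports Defs "HOL-Analysis.Function_Topology"
begin

text \<open>The decoherence functional is the Hermitian form
  D_n(w, w') = a(w) cnj(a(w')) [w_n = w'_n] / 2^n, where the amplitude a(w) is i to the
  number of jumps of w. Hence mu_n(B) is 2^-n times the sum over endpoints e of
  |sum of a(w) over w in B ending in e|^2: it is nonnegative and, being quadratic, satisfies
  the grade-2 sum rule on disjoint sets. Appending a step multiplies the amplitude by i
  exactly when the path jumps, so summing over the common endpoint of two extensions gives
  constructive interference iff they start from the same point; hence D_n is the marginal
  of D_(n+1), and mu is well defined on cylinders.

  Lower sets are closed in the compact product space Omega, so two disjoint lower sets
  already have disjoint n-prefixes for large n. From then on the sum rule for mu_n applies
  to the cylinder hulls A^(n), and it passes to the limits mu_hat.\<close>

lemma length_prefix_of [simp]: "length (prefix_of n w) = Suc n"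
  by (simp add: prefix_of_def)

lemma nth_prefix_of: "k \<le> n \<Longrightarrow> prefix_of n w ! k = w k"
  by (simp add: prefix_of_def nth_map_upt del: upt_Suc)

lemma prefix_of_eq_iff: "prefix_of n v = prefix_of n w \<longleftrightarrow> (\<forall>k\<le>n. v k = w k)"
  by (auto simp add: prefix_of_def simp del: upt_Suc)

lemma prefix_of_Suc: "prefix_of (Suc n) w = prefix_of n w @ [w (Suc n)]"
  by (simp add: prefix_of_def)

lemma prefix_of_in_Omega_n: "w \<in> Omega \<Longrightarrow> prefix_of n w \<in> Omega_n n"
  unfolding Omega_n_def Omega_def prefix_of_def by (force simp del: upt_Suc)

lemma ex_path_with_prefix:
  assumes "xs \<in> Omega_n n"
  obtains w where "w \<in> Omega" "prefix_of n w = xs"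
proof
  define w where "w k = (if k < length xs then xs ! k else 0)" for k
  have xs: "length xs = Suc n" "set xs \<subseteq> {0, 1}" "xs ! 0 = 0"
    using assms by (auto simp: Omega_n_def)
  then have "xs ! k \<in> {0, 1}" if "k < length xs" for k
    using nth_mem[OF that] by blast
  with xs show "w \<in> Omega"
    by (auto simp: Omega_def w_def)
  show "prefix_of n w = xs"
    by (rule nth_equalityI) (use xs in \<open>auto simp: nth_prefix_of w_def\<close>)
qed

lemma nth_Omega_n: "xs \<in> Omega_n n \<Longrightarrow> k \<le> n \<Longrightarrow> xs ! k \<in> {0, 1}"
  unfolding Omega_n_def by (metis (mono_tags) mem_Collect_eq le_imp_less_Suc nth_mem subsetD)

lemma finite_Omega_n: "finite (Omega_n n)"
proof (rule finite_subset)
  show "Omega_n n \<subseteq> {xs. set xs \<subseteq> {0, 1} \<and> length xs = Suc n}"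
    by (auto simp: Omega_n_def)
  show "finite {xs. set xs \<subseteq> {0::nat, 1} \<and> length xs = Suc n}"
    by (rule finite_lists_length_eq) simp
qed

lemma prefix_of_image_cyl: "B \<subseteq> Omega_n n \<Longrightarrow> prefix_of n ` cyl n B = B"
  unfolding cyl_def by (force elim: ex_path_with_prefix)

lemma up_eq_cyl: "up n A = cyl n (prefix_of n ` A)"
  unfolding up_def cyl_def by (auto simp: prefix_of_eq_iff[symmetric])

subsection \<open>The decoherence functional as a quadratic form\<close>

definition amplitude :: "nat \<Rightarrow> nat list \<Rightarrow> complex" where
  "amplitude n w = (\<Prod>k\<in>{1..n}. \<i> ^ jump w k)"

lemma D_eq_amplitude:
  "D n w w' = amplitude n w * cnj (amplitude n w') * of_bool (w ! n = w' ! n) / 2 ^ n"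
proof -
  have "inverse (\<i> ^ j) = cnj (\<i> ^ j)" for j :: nat
    by (metis complex_cnj_i complex_cnj_power inverse_i power_inverse)
  then show ?thesis
    by (simp add: D_def amplitude_def)
qed

lemma Re_sum_sum_cnj_same_class_nonneg:
  fixes f :: "'a \<Rightarrow> complex" and g :: "'a \<Rightarrow> 'b"
  assumes "finite B"
  shows "0 \<le> Re (\<Sum>w\<in>B. \<Sum>w'\<in>B. f w * cnj (f w') * of_bool (g w = g w'))"
proof -
  define z where "z e = (\<Sum>w\<in>{w\<in>B. g w = e}. f w)" for e
  have "(\<Sum>w'\<in>B. f w * cnj (f w') * of_bool (g w = g w')) = f w * cnj (z (g w))" for w
    using assms by (simp add: z_def sum_distrib_left sum.inter_filter[symmetric] eq_commute Int_def)
  then have "(\<Sum>w\<in>B. \<Sum>w'\<in>B. f w * cnj (f w') * of_bool (g w = g w'))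
      = (\<Sum>w\<in>B. f w * cnj (z (g w)))"
    by simp
  also have "\<dots> = (\<Sum>e\<in>g ` B. \<Sum>w\<in>{w\<in>B. g w = e}. f w * cnj (z (g w)))"
    using assms by (rule sum.image_gen)
  also have "\<dots> = (\<Sum>e\<in>g ` B. z e * cnj (z e))"
    by (rule sum.cong[OF refl]) (simp add: z_def sum_distrib_right)
  finally show ?thesis
    by (simp add: Re_sum complex_mult_cnj sum_nonneg)
qed

lemma mu_n_nonneg:
  assumes "finite B"
  shows "0 \<le> mu_n n B"
proof -
  define S where
    "S = (\<Sum>w\<in>B. \<Sum>w'\<in>B. amplitude n w * cnj (amplitude n w') * of_bool (w ! n = w' ! n))"
  have "mu_n n B = Re (S / 2 ^ n)"
    unfolding mu_n_def D_eq_amplitude S_def by (simp only: sum_divide_distrib)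
  moreover have "0 \<le> Re S"
    unfolding S_def by (rule Re_sum_sum_cnj_same_class_nonneg[OF assms])
  ultimately show ?thesis
    by simp
qed

lemma sum_sum_Un3:
  fixes K :: "'a \<Rightarrow> 'a \<Rightarrow> 'b::ab_group_add"
  defines "S U \<equiv> \<Sum>w\<in>U. \<Sum>w'\<in>U. K w w'"
  assumes "finite X" "finite Y" "finite Z"
    and "X \<inter> Y = {}" "X \<inter> Z = {}" "Y \<inter> Z = {}"
  shows "S (X \<union> Y \<union> Z) = S (X \<union> Y) + S (X \<union> Z) + S (Y \<union> Z) - S X - S Y - S Z"
  using assms by (simp add: S_def sum.union_disjoint Int_Un_distrib2 sum.distrib algebra_simps)

lemma mu_n_Un3:
  assumes "finite X" "finite Y" "finite Z"
    and "X \<inter> Y = {}" "X \<inter> Z = {}" "Y \<inter> Z = {}"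
  shows "mu_n n (X \<union> Y \<union> Z) = mu_n n (X \<union> Y) + mu_n n (X \<union> Z) + mu_n n (Y \<union> Z)
           - mu_n n X - mu_n n Y - mu_n n Z"
  using sum_sum_Un3[OF assms, of "D n"] by (simp add: mu_n_def)

subsection \<open>Consistency of the decoherence functionals\<close>

lemma amplitude_append:
  assumes "length u = Suc m"
  shows "amplitude (Suc m) (u @ [a]) = amplitude m u * \<i> ^ nat \<bar>int a - int (u ! m)\<bar>"
proof -
  have "jump (u @ [a]) k = jump u k" if "k \<in> {1..m}" for k
    using that assms by (auto simp: jump_def nth_append)
  moreover have "jump (u @ [a]) (Suc m) = nat \<bar>int a - int (u ! m)\<bar>"
    using assms by (simp add: jump_def nth_append)
  ultimately show ?thesis
    by (simp add: amplitude_def prod.cl_ivl_Suc)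
qed

lemma sum_last_step_phases:
  assumes "x \<in> {0, 1}" "y \<in> {0, 1}"
  shows "(\<Sum>a\<in>{0, 1::nat}. \<i> ^ nat \<bar>int a - int x\<bar> * cnj (\<i> ^ nat \<bar>int a - int y\<bar>))
    = 2 * of_bool (x = y)"
  using assms by auto

lemma sum_D_append:
  assumes u: "u \<in> Omega_n m" and v: "v \<in> Omega_n m"
  shows "(\<Sum>a\<in>{0, 1}. \<Sum>b\<in>{0, 1}. D (Suc m) (u @ [a]) (v @ [b])) = D m u v"
proof -
  have len: "length u = Suc m" "length v = Suc m"
    using u v by (auto simp: Omega_n_def)
  have last: "u ! m \<in> {0, 1}" "v ! m \<in> {0, 1}"
    using nth_Omega_n[OF u] nth_Omega_n[OF v] by simp_all
  let ?p = "\<lambda>a x. \<i> ^ nat \<bar>int a - int x\<bar>"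
  have "(\<Sum>a\<in>{0, 1}. \<Sum>b\<in>{0, 1}. D (Suc m) (u @ [a]) (v @ [b]))
      = (\<Sum>a\<in>{0, 1::nat}. ?p a (u ! m) * cnj (?p a (v ! m)))
          * amplitude m u * cnj (amplitude m v) / 2 ^ Suc m"
    by (simp add: D_eq_amplitude amplitude_append len nth_append algebra_simps add_divide_distrib)
  also have "\<dots> = D m u v"
    using last by (simp only: sum_last_step_phases) (simp add: D_eq_amplitude len)
  finally show ?thesis .
qed

definition extend_paths :: "nat list set \<Rightarrow> nat list set" where
  "extend_paths B = (\<lambda>(xs, a). xs @ [a]) ` (B \<times> {0, 1})"

lemma extend_paths_subset: "B \<subseteq> Omega_n m \<Longrightarrow> extend_paths B \<subseteq> Omega_n (Suc m)"
  unfolding extend_paths_def Omega_n_def by (force simp: nth_append)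

lemma cyl_extend_paths: "cyl (Suc m) (extend_paths B) = cyl m B"
proof -
  have "prefix_of m w @ [w (Suc m)] \<in> extend_paths B \<longleftrightarrow> prefix_of m w \<in> B"
    if "w \<in> Omega" for w
  proof -
    have "w (Suc m) \<in> {0, 1}"
      using that by (auto simp: Omega_def)
    then show ?thesis
      by (force simp: extend_paths_def)
  qed
  then show ?thesis
    by (auto simp: cyl_def prefix_of_Suc)
qed

lemma mu_n_extend_paths:
  assumes B: "B \<subseteq> Omega_n m"
  shows "mu_n (Suc m) (extend_paths B) = mu_n m B"
proof -
  have "inj_on (\<lambda>(xs, a). xs @ [a]) (B \<times> {0::nat, 1})"
    by (auto simp: inj_on_def)
  then have "(\<Sum>x\<in>extend_paths B. \<Sum>y\<in>extend_paths B. D (Suc m) x y)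
      = (\<Sum>(u, a)\<in>B \<times> {0, 1}. \<Sum>(v, b)\<in>B \<times> {0, 1}. D (Suc m) (u @ [a]) (v @ [b]))"
    by (simp add: extend_paths_def sum.reindex case_prod_unfold)
  also have "\<dots> = (\<Sum>u\<in>B. \<Sum>v\<in>B. \<Sum>a\<in>{0, 1}. \<Sum>b\<in>{0, 1}. D (Suc m) (u @ [a]) (v @ [b]))"
    by (simp add: sum.cartesian_product[symmetric] sum.distrib)
  also have "\<dots> = (\<Sum>u\<in>B. \<Sum>v\<in>B. D m u v)"
    using B by (intro sum.cong refl sum_D_append) auto
  finally show ?thesis
    by (simp add: mu_n_def)
qed

lemma funpow_extend_paths:
  assumes "B \<subseteq> Omega_n n"
  shows "(extend_paths ^^ d) B \<subseteq> Omega_n (n + d) \<and> cyl (n + d) ((extend_paths ^^ d) B) = cyl n B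
    \<and> mu_n (n + d) ((extend_paths ^^ d) B) = mu_n n B"
  using assms by (induction d) (auto simp: extend_paths_subset cyl_extend_paths mu_n_extend_paths)

lemma mu_n_cyl_eq:
  assumes B: "B \<subseteq> Omega_n n" and B': "B' \<subseteq> Omega_n m"
    and eq: "cyl n B = cyl m B'" and "n \<le> m"
  shows "mu_n n B = mu_n m B'"
proof -
  obtain d where m: "m = n + d"
    using \<open>n \<le> m\<close> le_Suc_ex by blast
  let ?E = "(extend_paths ^^ d) B"
  have E: "?E \<subseteq> Omega_n m" "cyl m ?E = cyl n B" "mu_n m ?E = mu_n n B"
    using funpow_extend_paths[OF B, of d] m by auto
  have "B' = ?E"
    using prefix_of_image_cyl[OF B'] prefix_of_image_cyl[OF E(1)] E(2) eq by simp
  with E(3) show ?thesis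
    by simp
qed

lemma mu_cyl:
  assumes B: "B \<subseteq> Omega_n n"
  shows "mu (cyl n B) = mu_n n B"
  unfolding mu_def
proof (rule the_equality)
  show "\<exists>n' B'. B' \<subseteq> Omega_n n' \<and> cyl n B = cyl n' B' \<and> mu_n n B = mu_n n' B'"
    using B by blast
next
  fix x
  assume "\<exists>n' B'. B' \<subseteq> Omega_n n' \<and> cyl n B = cyl n' B' \<and> x = mu_n n' B'"
  then obtain n' B' where B': "B' \<subseteq> Omega_n n'" "cyl n B = cyl n' B'" "x = mu_n n' B'"
    by blast
  show "x = mu_n n B"
    using mu_n_cyl_eq[OF B B'(1,2)] mu_n_cyl_eq[OF B'(1) B B'(2)[symmetric]] B'(3)
    by (cases "n \<le> n'") auto
qed

lemma mu_up: "A \<subseteq> Omega \<Longrightarrow> mu (up n A) = mu_n n (prefix_of n ` A)"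
  using mu_cyl[of "prefix_of n ` A" n] prefix_of_in_Omega_n by (auto simp: up_eq_cyl)

subsection \<open>Lower sets\<close>

lemma up_antimono: "m \<le> n \<Longrightarrow> up n A \<subseteq> up m A"
  unfolding up_def by auto

lemma up_Un: "up n (A \<union> B) = up n A \<union> up n B"
  unfolding up_def by auto

lemma subset_up: "A \<subseteq> Omega \<Longrightarrow> A \<subseteq> up n A"
  unfolding up_def by auto

lemma Lower_iff: "A \<in> Lower \<longleftrightarrow> A \<subseteq> Omega \<and> (\<forall>w. (\<forall>n. w \<in> up n A) \<longrightarrow> w \<in> A)"
  unfolding Lower_def using subset_up[of A] by blast

lemma Un_in_Lower:
  assumes A: "A \<in> Lower" and B: "B \<in> Lower"
  shows "A \<union> B \<in> Lower"
proof -
  have "w \<in> A \<union> B" if w: "\<forall>n. w \<in> up n (A \<union> B)" for w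
  proof (rule ccontr)
    assume "w \<notin> A \<union> B"
    then obtain i j where "w \<notin> up i A" "w \<notin> up j B"
      using A B unfolding Lower_iff by blast
    then have "w \<notin> up (max i j) A \<union> up (max i j) B"
      using up_antimono[of i "max i j" A] up_antimono[of j "max i j" B] by auto
    with w show False
      by (simp add: up_Un)
  qed
  then show ?thesis
    using A B by (simp add: Lower_iff)
qed

lemma up_cyl: "B \<subseteq> Omega_n n \<Longrightarrow> n \<le> m \<Longrightarrow> up m (cyl n B) = cyl n B"
  unfolding up_def cyl_def by auto (metis prefix_of_eq_iff le_trans)

lemma cyl_in_Lower: "B \<subseteq> Omega_n n \<Longrightarrow> cyl n B \<in> Lower"
  using up_cyl[of B n] up_antimono[of n _ "cyl n B"]
  by (auto simp: Lower_iff cyl_def)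

definition path_topology :: "(nat \<Rightarrow> nat) topology" where
  "path_topology = product_topology (\<lambda>k. discrete_topology (if k = 0 then {0} else {0, 1})) UNIV"

lemma topspace_path_topology: "topspace path_topology = Omega"
proof -
  have "w \<in> Omega \<longleftrightarrow> (\<forall>k. w k \<in> (if k = 0 then {0} else {0, 1}))" for w :: "nat \<Rightarrow> nat"
  proof
    assume w: "\<forall>k. w k \<in> (if k = 0 then {0} else {0, 1})"
    then have "w 0 = 0"
      using spec[OF w, of 0] by simp
    moreover have "w k \<in> {0, 1}" for k
      using spec[OF w, of k] by (simp split: if_splits)
    ultimately show "w \<in> Omega"
      by (simp add: Omega_def)
  qed (auto simp: Omega_def)
  then show ?thesis
    by (auto simp: path_topology_def PiE_iff)
qed

lemma compact_space_path_topology: "compact_space path_topology"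
  unfolding path_topology_def compact_space_product_topology
  by (simp add: compact_space_discrete_topology)

lemma closedin_coordinate: "closedin path_topology {w \<in> Omega. w k = c}"
proof -
  define F where "F = (if k = 0 then {0} else {0, 1::nat})"
  have "continuous_map path_topology (discrete_topology F) (\<lambda>w. w k)"
    unfolding path_topology_def F_def by (rule continuous_map_product_projection) simp
  then have "closedin path_topology {w \<in> Omega. w k \<in> {c} \<inter> F}"
    using closedin_continuous_map_preimage[of path_topology _ "\<lambda>w. w k" "{c} \<inter> F"]
    by (simp add: topspace_path_topology)
  moreover have "w k \<in> F" if "w \<in> Omega" for w
    using that by (auto simp: Omega_def F_def)
  then have "{w \<in> Omega. w k \<in> {c} \<inter> F} = {w \<in> Omega. w k = c}"
    by blast
  ultimately show ?thesis
    by simp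
qed

lemma closedin_cyl: "closedin path_topology (cyl n B)"
proof -
  have "cyl n B = (\<Union>p \<in> B \<inter> Omega_n n. \<Inter>k\<le>n. {w \<in> Omega. w k = p ! k})"
  proof (intro equalityI subsetI)
    fix w
    assume "w \<in> cyl n B"
    then show "w \<in> (\<Union>p \<in> B \<inter> Omega_n n. \<Inter>k\<le>n. {w \<in> Omega. w k = p ! k})"
      by (auto simp: cyl_def prefix_of_in_Omega_n nth_prefix_of intro!: bexI[of _ "prefix_of n w"])
  next
    fix w
    assume "w \<in> (\<Union>p \<in> B \<inter> Omega_n n. \<Inter>k\<le>n. {w \<in> Omega. w k = p ! k})"
    then obtain p where p: "p \<in> B" "length p = Suc n" "w \<in> Omega" "\<forall>k\<le>n. w k = p ! k"
      by (auto simp: Omega_n_def)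
    have "prefix_of n w = p"
      by (rule nth_equalityI) (use p in \<open>auto simp: nth_prefix_of\<close>)
    with p show "w \<in> cyl n B"
      by (simp add: cyl_def)
  qed
  also have "closedin path_topology \<dots>"
    by (intro closedin_Union closedin_Inter) (auto simp: finite_Omega_n closedin_coordinate)
  finally show ?thesis .
qed

lemma eventually_disjoint_prefixes:
  assumes A: "A \<in> Lower" and B: "B \<in> Lower" and "A \<inter> B = {}"
  shows "eventually (\<lambda>n. prefix_of n ` A \<inter> prefix_of n ` B = {}) sequentially"
proof -
  define C where "C n = up n A \<inter> up n B" for n
  have "(\<Inter>n. C n) = A \<inter> B"
    using A B subset_up by (auto simp: C_def Lower_iff)
  moreover have "closedin path_topology (C n)" for n
    unfolding C_def up_eq_cyl by (intro closedin_Int closedin_cyl)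
  moreover have "decseq C"
    unfolding decseq_def C_def using up_antimono by blast
  ultimately obtain N where "C N = {}"
    using compact_space_imp_nest[OF compact_space_path_topology] \<open>A \<inter> B = {}\<close> by metis
  have "prefix_of n ` A \<inter> prefix_of n ` B = {}" if "N \<le> n" for n
  proof -
    have "C n = {}"
      using \<open>decseq C\<close> \<open>C N = {}\<close> that by (auto simp: decseq_def)
    moreover have "a \<in> C n" if "a \<in> A" "b \<in> B" "prefix_of n a = prefix_of n b" for a b
      using that A B unfolding C_def up_def Lower_iff prefix_of_eq_iff by blast
    ultimately show ?thesis
      by blast
  qed
  then show ?thesis
    by (auto simp: eventually_sequentially)
qed

subsection \<open>The extension \<open>mu_hat\<close>\<close>

lemma mu_up_nonneg: "A \<subseteq> Omega \<Longrightarrow> 0 \<le> mu (up n A)"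
  using finite_subset[OF _ finite_Omega_n, of "prefix_of n ` A" n] prefix_of_in_Omega_n
  by (auto simp: mu_up intro!: mu_n_nonneg)

lemma Beneficial_tendsto_mu_hat: "A \<in> Beneficial \<Longrightarrow> (\<lambda>n. mu (up n A)) \<longlonglongrightarrow> mu_hat A"
  unfolding Beneficial_def mu_hat_def by (simp add: convergent_LIMSEQ_iff)

lemma Cyl_subset_Lower: "Cyl \<subseteq> Lower"
  by (auto simp: Cyl_def cyl_in_Lower)

lemma tendsto_mu_up_Cyl:
  assumes "A \<in> Cyl"
  shows "(\<lambda>n. mu (up n A)) \<longlonglongrightarrow> mu A"
proof -
  obtain n B where "B \<subseteq> Omega_n n" "A = cyl n B"
    using assms by (auto simp: Cyl_def)
  then have "eventually (\<lambda>m. mu (up m A) = mu A) sequentially"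
    by (auto simp: up_cyl eventually_sequentially intro: exI[of _ n])
  then show ?thesis
    by (simp add: tendsto_eventually)
qed

lemma Cyl_subset_Beneficial_Lower: "Cyl \<subseteq> Beneficial \<inter> Lower"
proof
  fix A
  assume "A \<in> Cyl"
  then have "A \<in> Lower"
    using Cyl_subset_Lower by blast
  with \<open>A \<in> Cyl\<close> tendsto_mu_up_Cyl show "A \<in> Beneficial \<inter> Lower"
    by (auto simp: Beneficial_def Lower_iff convergent_def)
qed

lemma mu_hat_Cyl: "A \<in> Cyl \<Longrightarrow> mu_hat A = mu A"
  unfolding mu_hat_def using tendsto_mu_up_Cyl by (rule limI)

lemma empty_in_Cyl: "{} \<in> Cyl"
  unfolding Cyl_def cyl_def by (auto intro!: exI[of _ 0] exI[of _ "{}"])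

lemma Omega_in_Cyl: "Omega \<in> Cyl"
  unfolding Cyl_def cyl_def using prefix_of_in_Omega_n
  by (auto intro!: exI[of _ 0] exI[of _ "Omega_n 0"])

lemma eventually_mu_up_Un3:
  assumes "A \<in> Lower" "B \<in> Lower" "C \<in> Lower"
    and "A \<inter> B = {}" "A \<inter> C = {}" "B \<inter> C = {}"
  shows "eventually (\<lambda>n. mu (up n (A \<union> B \<union> C)) = mu (up n (A \<union> B)) + mu (up n (A \<union> C))
    + mu (up n (B \<union> C)) - mu (up n A) - mu (up n B) - mu (up n C)) sequentially"
  using eventually_disjoint_prefixes[OF assms(1,2,4)] eventually_disjoint_prefixes[OF assms(1,3,5)]
    eventually_disjoint_prefixes[OF assms(2,3,6)]
proof eventually_elim
  case (elim n)
  have Omega: "A \<subseteq> Omega" "B \<subseteq> Omega" "C \<subseteq> Omega"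
    using assms by (simp_all add: Lower_iff)
  have fin: "finite (prefix_of n ` X)" if "X \<subseteq> Omega" for X
    using that prefix_of_in_Omega_n by (blast intro: finite_subset[OF _ finite_Omega_n])
  have "mu (up n X) = mu_n n (prefix_of n ` X)" if "X \<subseteq> Omega" for X
    using that by (rule mu_up)
  with Omega show ?case
    using mu_n_Un3[OF fin fin fin elim, OF Omega] by (simp add: image_Un)
qed

lemma tendsto_mu_up_Un3:
  assumes "A \<in> Beneficial \<inter> Lower" "B \<in> Beneficial \<inter> Lower" "C \<in> Beneficial \<inter> Lower"
    and "A \<inter> B = {}" "A \<inter> C = {}" "B \<inter> C = {}"
    and "A \<union> B \<in> Beneficial" "A \<union> C \<in> Beneficial" "B \<union> C \<in> Beneficial"
  shows "(\<lambda>n. mu (up n (A \<union> B \<union> C))) \<longlonglongrightarrow>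
    mu_hat (A \<union> B) + mu_hat (A \<union> C) + mu_hat (B \<union> C) - mu_hat A - mu_hat B - mu_hat C"
proof (rule Lim_transform_eventually)
  show "(\<lambda>n. mu (up n (A \<union> B)) + mu (up n (A \<union> C)) + mu (up n (B \<union> C))
      - mu (up n A) - mu (up n B) - mu (up n C)) \<longlonglongrightarrow>
    mu_hat (A \<union> B) + mu_hat (A \<union> C) + mu_hat (B \<union> C) - mu_hat A - mu_hat B - mu_hat C"
    using assms by (intro tendsto_intros Beneficial_tendsto_mu_hat) auto
  show "eventually (\<lambda>n. mu (up n (A \<union> B)) + mu (up n (A \<union> C)) + mu (up n (B \<union> C))
      - mu (up n A) - mu (up n B) - mu (up n C) = mu (up n (A \<union> B \<union> C))) sequentially"
    using eventually_mu_up_Un3[of A B C] assms by (simp add: eq_commute)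
qed

lemma quad_alg_Lower: "quad_alg Omega Lower"
proof -
  have "Lower \<subseteq> Pow Omega"
    by (auto simp: Lower_iff)
  then show ?thesis
    unfolding quad_alg_def using Cyl_subset_Lower empty_in_Cyl Omega_in_Cyl Un_in_Lower by blast
qed

lemma quad_alg_Beneficial_Lower: "quad_alg Omega (Beneficial \<inter> Lower)"
  unfolding quad_alg_def
proof (intro conjI ballI impI)
  show "Beneficial \<inter> Lower \<subseteq> Pow Omega"
    by (auto simp: Lower_iff)
  show "{} \<in> Beneficial \<inter> Lower" "Omega \<in> Beneficial \<inter> Lower"
    using Cyl_subset_Beneficial_Lower empty_in_Cyl Omega_in_Cyl by auto
next
  fix A B C
  assume "A \<in> Beneficial \<inter> Lower" "B \<in> Beneficial \<inter> Lower" "C \<in> Beneficial \<inter> Lower"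
    and "A \<inter> B = {} \<and> A \<inter> C = {} \<and> B \<inter> C = {} \<and> A \<union> B \<in> Beneficial \<inter> Lower \<and>
      A \<union> C \<in> Beneficial \<inter> Lower \<and> B \<union> C \<in> Beneficial \<inter> Lower"
  with tendsto_mu_up_Un3[of A B C] Un_in_Lower show "A \<union> B \<union> C \<in> Beneficial \<inter> Lower"
    by (auto simp: Beneficial_def convergent_def)
qed

lemma q_measure_mu_hat: "q_measure (Beneficial \<inter> Lower) mu_hat"
  unfolding q_measure_def
proof (intro conjI ballI impI)
  fix A
  assume "A \<in> Beneficial \<inter> Lower"
  then show "0 \<le> mu_hat A"
    by (intro LIMSEQ_le_const[OF Beneficial_tendsto_mu_hat]) (auto simp: Lower_iff mu_up_nonneg)
next
  fix A B C
  assume "A \<in> Beneficial \<inter> Lower" "B \<in> Beneficial \<inter> Lower" "C \<in> Beneficial \<inter> Lower"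
    and "A \<inter> B = {} \<and> A \<inter> C = {} \<and> B \<inter> C = {} \<and> A \<union> B \<in> Beneficial \<inter> Lower \<and>
      A \<union> C \<in> Beneficial \<inter> Lower \<and> B \<union> C \<in> Beneficial \<inter> Lower"
  with tendsto_mu_up_Un3[of A B C]
  show "mu_hat (A \<union> B \<union> C) =
    mu_hat (A \<union> B) + mu_hat (A \<union> C) + mu_hat (B \<union> C) - mu_hat A - mu_hat B - mu_hat C"
    unfolding mu_hat_def[of "A \<union> B \<union> C"] by (auto intro: limI)
qed

theorem theorem4p1:
  shows "quad_alg Omega Lower \<and> quad_alg Omega (Beneficial \<inter> Lower) \<and>
         q_measure (Beneficial \<inter> Lower) mu_hat \<and>
         Cyl \<subseteq> Beneficial \<inter> Lower \<and> (\<forall>A\<in>Cyl. mu_hat A = mu A)"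
  using quad_alg_Lower quad_alg_Beneficial_Lower q_measure_mu_hat Cyl_subset_Beneficial_Lower
    mu_hat_Cyl by blast

end
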